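(* Let $C\in\mathbb{R}^{n\times n}$ be symmetric positive definite, let $F\in\mathbb{R}^{n\times n_p}$ with $n_p<n$ have full column rank, and let $\beta>\beta_\ell>0$. Set $\hat{C}=C+\beta FF^T$ and $\hat{C}_\ell=C+\beta_\ell FF^T$. For $\mathbf{b}\in\mathbb{R}^n$ consider the stationary iteration $$\mathbf{w}_{k+1}=\mathbf{w}_k+\frac{\beta_\ell}{\beta}\hat{C}_\ell^{-1}\left(\mathbf{b}-\hat{C}\mathbf{w}_k\right),\qquad k=0,1,2,\dots$$ Its iteration matrix $G=I-\frac{\beta_\ell}{\beta}\hat{C}_\ell^{-1}\hat{C}$ satisfies $G=\left(1-\frac{\beta_\ell}{\beta}\right)\hat{C}_\ell^{-1}C$ and has spectral radius exactly $1-\beta_\ell/\beta<1$. Consequently, for every $\mathbf{b}$ and every initial guess $\mathbf{w}_0$, the iterates $\mathbf{w}_k$ converge to the unique solution of $\hat{C}\mathbf{w}=\mathbf{b}$, with asymptotic convergence factor $1-\beta_\ell/\beta$ (i.e., rate $R=\log(1-\beta_\ell/\beta)$ in the paper's convention). *)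

theory Defs
  imports "HOL-Analysis.Analysis"
begin

definition spd :: "real^'n^'n \<Rightarrow> bool" where
  "spd A \<longleftrightarrow> transpose A = A \<and> (\<forall>x. x \<noteq> 0 \<longrightarrow> x \<bullet> (A *v x) > 0)"

definition cspectrum :: "real^'n^'n \<Rightarrow> complex set" where
  "cspectrum A = {z. \<exists>v::complex^'n. v \<noteq> 0 \<and>
      (\<chi> i j. complex_of_real (A $ i $ j)) *v v = z *s v}"

definition spectral_radius :: "real^'n^'n \<Rightarrow> real" where
  "spectral_radius A = Max (cmod ` cspectrum A)"

end

theory Submission
  imports Defs
begin

(* Write K = F F^T, L = C + beta_l K and c = 1 - beta_l / beta. The iteration matrix is
   G = c L^-1 C, so L G = c C: the eigenvalues of G are c times those of the pencil (C, L).
   As C and L are symmetric with 0 < C <= L, a Rayleigh quotient argument makes every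
   complex eigenvalue of G real and in [0, c]; eigenvectors for distinct eigenvalues are
   L-orthogonal, so there are finitely many. A nonzero u with F^T u = 0, which exists since
   n_p < n, has C u = L u and hence G u = c u, so the spectral radius is exactly c.
   Finally G contracts the energy norm of L by the factor c, and the errors w_k - w
   satisfy e_(k+1) = G e_k, so they tend to 0. *)

lemma invertible_matrix_inv:
  fixes A :: "'a::semiring_1^'n^'m"
  assumes "invertible A"
  shows "A ** matrix_inv A = mat 1" and "matrix_inv A ** A = mat 1"
  using someI_ex[OF assms[unfolded invertible_def]] unfolding matrix_inv_def by auto

lemma invertible_ex1_solution:
  fixes A :: "real^'n^'n"
  assumes "invertible A"
  shows "\<exists>!x. A *v x = b"
proof
  show "A *v (matrix_inv A *v b) = b"
    by (simp add: matrix_vector_mul_assoc invertible_matrix_inv[OF assms])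
  show "x = matrix_inv A *v b" if "A *v x = b" for x
    using that by (simp add: matrix_vector_mul_assoc invertible_matrix_inv[OF assms] flip: that)
qed

lemma symmetric_inner_matrix_commute:
  fixes A :: "real^'n^'n"
  assumes "transpose A = A"
  shows "u \<bullet> (A *v v) = v \<bullet> (A *v u)"
  by (metis assms dot_lmul_matrix inner_commute transpose_matrix_vector)

lemma inner_mult_transpose_nonneg:
  fixes F :: "real^'p^'n"
  shows "0 \<le> x \<bullet> ((F ** transpose F) *v x)"
  by (metis dot_lmul_matrix inner_ge_zero matrix_vector_mul_assoc transpose_matrix_vector)

lemma transpose_add: "transpose (A + B) = transpose A + transpose B"
  by (simp add: transpose_def vec_eq_iff)

lemma spd_quadratic_nonneg: "spd A \<Longrightarrow> 0 \<le> x \<bullet> (A *v x)"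
  unfolding spd_def by (cases "x = 0") (auto intro: less_imp_le)

lemma spd_invertible:
  assumes "spd A"
  shows "invertible A"
proof -
  have "A *v x = 0 \<Longrightarrow> x = 0" for x
    using assms unfolding spd_def by (metis inner_zero_right less_irrefl)
  then show ?thesis
    using matrix_left_invertible_ker invertible_left_inverse by blast
qed

lemma quadratic_form_le_add_mult_transpose:
  fixes C :: "real^'n^'n" and F :: "real^'p^'n"
  assumes "0 \<le> t"
  shows "x \<bullet> (C *v x) \<le> x \<bullet> ((C + t *\<^sub>R (F ** transpose F)) *v x)"
  using assms inner_mult_transpose_nonneg[of x F]
  by (simp add: matrix_vector_mult_add_rdistrib inner_add_right flip: scaleR_matrix_vector_assoc)

lemma spd_add_mult_transpose:
  fixes C :: "real^'n^'n" and F :: "real^'p^'n"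
  assumes "spd C" and "0 \<le> t"
  shows "spd (C + t *\<^sub>R (F ** transpose F))"
  unfolding spd_def
proof safe
  show "transpose (C + t *\<^sub>R (F ** transpose F)) = C + t *\<^sub>R (F ** transpose F)"
    using assms(1) unfolding spd_def
    by (simp add: transpose_add transpose_scalar matrix_transpose_mul)
  fix x :: "real^'n"
  assume "x \<noteq> 0"
  then have "0 < x \<bullet> (C *v x)"
    using assms(1) unfolding spd_def by blast
  then show "0 < x \<bullet> ((C + t *\<^sub>R (F ** transpose F)) *v x)"
    using quadratic_form_le_add_mult_transpose[OF assms(2)] by (rule less_le_trans)
qed

lemma spd_coercive:
  fixes A :: "real^'n^'n"
  assumes "spd A"
  obtains m where "0 < m" and "\<And>x. m * (norm x)\<^sup>2 \<le> x \<bullet> (A *v x)"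
proof -
  have "sphere (0::real^'n) 1 \<noteq> {}"
    using norm_axis_1 by (metis mem_sphere_0 empty_iff)
  moreover have "continuous_on (sphere 0 1) (\<lambda>x. x \<bullet> (A *v x))"
    by (intro continuous_intros)
  ultimately obtain x0 where x0: "x0 \<in> sphere 0 1"
    and min: "\<And>y. y \<in> sphere 0 1 \<Longrightarrow> x0 \<bullet> (A *v x0) \<le> y \<bullet> (A *v y)"
    using continuous_attains_inf[OF compact_sphere] by blast
  have "x0 \<noteq> 0"
    using x0 by auto
  then have "0 < x0 \<bullet> (A *v x0)"
    using assms unfolding spd_def by blast
  moreover have "x0 \<bullet> (A *v x0) * (norm x)\<^sup>2 \<le> x \<bullet> (A *v x)" for x
  proof (cases "x = 0")
    case False
    have "x0 \<bullet> (A *v x0) \<le> (x /\<^sub>R norm x) \<bullet> (A *v (x /\<^sub>R norm x))"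
      using False by (intro min) simp
    also have "\<dots> = x \<bullet> (A *v x) / (norm x)\<^sup>2"
      by (simp add: matrix_vector_mult_scaleR power2_eq_square divide_inverse)
    finally show ?thesis
      using False by (simp add: pos_le_divide_eq)
  qed simp
  ultimately show ?thesis
    using that by blast
qed

lemma independent_if_form_orthogonal:
  fixes L :: "real^'n^'n" and V :: "(real^'n) set"
  assumes diag: "\<And>v. v \<in> V \<Longrightarrow> v \<bullet> (L *v v) \<noteq> 0"
    and off_diag: "\<And>u v. u \<in> V \<Longrightarrow> v \<in> V \<Longrightarrow> u \<noteq> v \<Longrightarrow> u \<bullet> (L *v v) = 0"
  shows "independent V"
  unfolding independent_explicit_finite_subsets
proof (intro allI impI ballI)
  fix S g v
  assume S: "S \<subseteq> V" "finite S" and sum: "(\<Sum>w\<in>S. g w *\<^sub>R w) = 0" and v: "v \<in> S"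
  have "0 = (v v* L) \<bullet> (\<Sum>w\<in>S. g w *\<^sub>R w)"
    by (simp add: sum)
  also have "\<dots> = (\<Sum>w\<in>S. g w * (v \<bullet> (L *v w)))"
    by (simp add: inner_sum_right dot_lmul_matrix)
  also have "\<dots> = g v * (v \<bullet> (L *v v))"
    using S v by (subst sum.mono_neutral_right[of S "{v}"]) (auto intro: off_diag)
  finally show "g v = 0"
    using S v diag by auto
qed

lemma cspectrum_Re_Im_eigenpair:
  fixes G :: "real^'n^'n"
  assumes "z \<in> cspectrum G"
  obtains x y :: "real^'n" where "x \<noteq> 0 \<or> y \<noteq> 0"
    and "G *v x = Re z *\<^sub>R x - Im z *\<^sub>R y" and "G *v y = Im z *\<^sub>R x + Re z *\<^sub>R y"
proof -
  obtain v where "v \<noteq> 0" and eig: "(\<chi> i j. complex_of_real (G$i$j)) *v v = z *s v"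
    using assms unfolding cspectrum_def by blast
  define x where "x = (\<chi> i. Re (v$i))"
  define y where "y = (\<chi> i. Im (v$i))"
  have row: "(\<Sum>j\<in>UNIV. complex_of_real (G$i$j) * v$j) = z * v$i" for i
    using eig by (simp add: vec_eq_iff matrix_vector_mult_def)
  have "G *v x = Re z *\<^sub>R x - Im z *\<^sub>R y"
    using arg_cong[OF row, of Re]
    by (simp add: vec_eq_iff matrix_vector_mult_def Re_sum x_def y_def)
  moreover have "G *v y = Im z *\<^sub>R x + Re z *\<^sub>R y"
    using arg_cong[OF row, of Im]
    by (simp add: vec_eq_iff matrix_vector_mult_def Im_sum x_def y_def)
  moreover have "x \<noteq> 0 \<or> y \<noteq> 0"
    using \<open>v \<noteq> 0\<close> by (auto simp: x_def y_def vec_eq_iff complex_eq_iff)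
  ultimately show ?thesis
    using that by blast
qed

lemma of_real_eigenvalue_in_cspectrum:
  fixes G :: "real^'n^'n"
  assumes "u \<noteq> 0" and "G *v u = s *\<^sub>R u"
  shows "complex_of_real s \<in> cspectrum G"
  unfolding cspectrum_def
proof (intro CollectI exI conjI)
  show "(\<chi> i. complex_of_real (u$i)) \<noteq> 0"
    using assms(1) by (simp add: vec_eq_iff)
  have "(\<Sum>j\<in>UNIV. G$i$j * u$j) = s * u$i" for i
    using assms(2) by (simp add: vec_eq_iff matrix_vector_mult_def)
  then show "(\<chi> i j. complex_of_real (G$i$j)) *v (\<chi> i. complex_of_real (u$i))
      = complex_of_real s *s (\<chi> i. complex_of_real (u$i))"
    by (simp add: vec_eq_iff matrix_vector_mult_def flip: of_real_mult of_real_sum)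
qed

locale spd_pencil =
  fixes C L G :: "real^'n^'n" and c :: real
  assumes C_spd: "spd C" and L_spd: "spd L"
    and C_le_L: "\<And>x. x \<bullet> (C *v x) \<le> x \<bullet> (L *v x)"
    and L_mult_G: "L ** G = c *\<^sub>R C"
    and c_nonneg: "0 \<le> c"
begin

lemma L_mult_G_vector: "L *v (G *v x) = c *\<^sub>R (C *v x)"
  by (simp add: matrix_vector_mul_assoc L_mult_G flip: scaleR_matrix_vector_assoc)

lemma inner_L_mult_G: "u \<bullet> (L *v (G *v v)) = c * (u \<bullet> (C *v v))"
  by (simp add: L_mult_G_vector)

lemma C_inner_commute: "u \<bullet> (C *v v) = v \<bullet> (C *v u)"
  using C_spd symmetric_inner_matrix_commute unfolding spd_def by blast

lemma L_inner_commute: "u \<bullet> (L *v v) = v \<bullet> (L *v u)"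
  using L_spd symmetric_inner_matrix_commute unfolding spd_def by blast

lemma G_mult_eq_if_C_eq_L:
  assumes "C *v u = L *v u"
  shows "G *v u = c *\<^sub>R u"
proof -
  have "L *v (G *v u) = L *v (c *\<^sub>R u)"
    using assms by (simp add: L_mult_G_vector matrix_vector_mult_scaleR)
  then show ?thesis
    using inj_matrix_vector_mult[OF spd_invertible[OF L_spd]] by (simp add: inj_eq)
qed

lemma Re_Im_eigenpair_real:
  assumes xy: "x \<noteq> 0 \<or> y \<noteq> 0"
    and Gx: "G *v x = a *\<^sub>R x - b *\<^sub>R y" and Gy: "G *v y = b *\<^sub>R x + a *\<^sub>R y"
  shows "b = 0" and "0 \<le> a" and "a \<le> c"
proof -
  define P where "P = x \<bullet> (C *v x) + y \<bullet> (C *v y)"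
  define Q where "Q = x \<bullet> (L *v x) + y \<bullet> (L *v y)"
  have "0 < Q"
    using xy L_spd spd_quadratic_nonneg[OF L_spd] unfolding Q_def spd_def
    by (metis add_nonneg_pos add_pos_nonneg)
  have "0 \<le> P" and "P \<le> Q"
    using spd_quadratic_nonneg[OF C_spd] C_le_L unfolding P_def Q_def by (auto intro: add_mono)
  \<comment> \<open>Real and imaginary parts of v^H L G v = c v^H C v for v = x + i y.\<close>
  have "c * P = a * Q" and "b * Q = 0"
    using inner_L_mult_G[of x x] inner_L_mult_G[of y y] inner_L_mult_G[of x y] inner_L_mult_G[of y x]
      L_inner_commute[of x y] C_inner_commute[of x y]
    unfolding P_def Q_def Gx Gy
    by (simp_all add: matrix_vector_mult_diff_distrib matrix_vector_right_distrib
        matrix_vector_mult_scaleR inner_diff_right inner_add_right algebra_simps)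
  show "b = 0"
    using \<open>b * Q = 0\<close> \<open>0 < Q\<close> by simp
  show "0 \<le> a"
    using \<open>c * P = a * Q\<close> \<open>0 < Q\<close> \<open>0 \<le> P\<close> c_nonneg
    by (metis mult_nonneg_nonneg zero_le_mult_iff not_less)
  show "a \<le> c"
    using \<open>c * P = a * Q\<close> \<open>0 < Q\<close> \<open>P \<le> Q\<close> c_nonneg
    by (metis mult_left_mono mult_le_cancel_right_pos mult.commute)
qed

lemma cspectrum_subset_eigenvalues:
  "cspectrum G \<subseteq> complex_of_real ` {s. 0 \<le> s \<and> s \<le> c \<and> (\<exists>u. u \<noteq> 0 \<and> G *v u = s *\<^sub>R u)}"
proof
  fix z
  assume "z \<in> cspectrum G"
  then obtain x y where xy: "x \<noteq> 0 \<or> y \<noteq> 0"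
    and Gx: "G *v x = Re z *\<^sub>R x - Im z *\<^sub>R y" and Gy: "G *v y = Im z *\<^sub>R x + Re z *\<^sub>R y"
    by (rule cspectrum_Re_Im_eigenpair)
  note real = Re_Im_eigenpair_real[OF xy Gx Gy]
  then have "\<exists>u. u \<noteq> 0 \<and> G *v u = Re z *\<^sub>R u"
    using xy Gx Gy by auto
  moreover have "z = complex_of_real (Re z)"
    using real by (simp add: complex_eq_iff)
  ultimately show "z \<in> complex_of_real ` {s. 0 \<le> s \<and> s \<le> c \<and> (\<exists>u. u \<noteq> 0 \<and> G *v u = s *\<^sub>R u)}"
    using real by blast
qed

lemma eigenvectors_L_orthogonal:
  assumes "G *v u = s *\<^sub>R u" and "G *v v = t *\<^sub>R v" and "s \<noteq> t"
  shows "u \<bullet> (L *v v) = 0"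
proof -
  have "t * (u \<bullet> (L *v v)) = s * (u \<bullet> (L *v v))"
    using inner_L_mult_G[of u v] inner_L_mult_G[of v u] C_inner_commute[of u v] L_inner_commute[of u v] assms
    by (simp add: matrix_vector_mult_scaleR)
  then show ?thesis
    using assms(3) by simp
qed

lemma finite_eigenvalues: "finite {s. \<exists>u. u \<noteq> 0 \<and> G *v u = s *\<^sub>R u}"
proof -
  define S where "S = {s. \<exists>u. u \<noteq> 0 \<and> G *v u = s *\<^sub>R u}"
  have "\<forall>s\<in>S. \<exists>u. u \<noteq> 0 \<and> G *v u = s *\<^sub>R u"
    unfolding S_def by blast
  then obtain U where U: "\<And>s. s \<in> S \<Longrightarrow> U s \<noteq> 0 \<and> G *v U s = s *\<^sub>R U s"
    using bchoice by metis
  have "inj_on U S"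
  proof (rule inj_onI)
    fix s t
    assume s: "s \<in> S" and t: "t \<in> S" and "U s = U t"
    have "s *\<^sub>R U s = G *v U s"
      using U[OF s] by simp
    also have "\<dots> = t *\<^sub>R U s"
      using U[OF t] \<open>U s = U t\<close> by simp
    finally show "s = t"
      using U[OF s] by simp
  qed
  moreover have "independent (U ` S)"
  proof (rule independent_if_form_orthogonal)
    show "v \<bullet> (L *v v) \<noteq> 0" if "v \<in> U ` S" for v
      using that U L_spd unfolding spd_def by (metis imageE less_irrefl)
    show "u \<bullet> (L *v v) = 0" if "u \<in> U ` S" "v \<in> U ` S" "u \<noteq> v" for u v
      using that U eigenvectors_L_orthogonal by (metis imageE)
  qed
  ultimately show ?thesis
    unfolding S_def[symmetric] using independent_bound finite_image_iff by blast
qed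

lemma spectral_radius_eq:
  assumes "u \<noteq> 0" and "G *v u = c *\<^sub>R u"
  shows "spectral_radius G = c"
proof -
  let ?S = "{s. 0 \<le> s \<and> s \<le> c \<and> (\<exists>u. u \<noteq> 0 \<and> G *v u = s *\<^sub>R u)}"
  have "cmod ` cspectrum G \<subseteq> ?S"
  proof
    fix r
    assume "r \<in> cmod ` cspectrum G"
    then obtain s where "s \<in> ?S" and "r = cmod (complex_of_real s)"
      using cspectrum_subset_eigenvalues by blast
    then show "r \<in> ?S"
      by simp
  qed
  moreover have "finite ?S"
    using finite_eigenvalues by (rule finite_subset[rotated]) auto
  moreover have "c \<in> cmod ` cspectrum G"
    using of_real_eigenvalue_in_cspectrum[OF assms] c_nonneg by force
  ultimately show ?thesis
    unfolding spectral_radius_def by (intro Max_eqI) (auto intro: finite_subset)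
qed

lemma energy_contraction: "(G *v x) \<bullet> (L *v (G *v x)) \<le> c\<^sup>2 * (x \<bullet> (L *v x))"
proof -
  define v where "v = G *v x"
  have "0 \<le> (c *\<^sub>R x - v) \<bullet> (C *v (c *\<^sub>R x - v))"
    using spd_quadratic_nonneg[OF C_spd] .
  also have "\<dots> = c\<^sup>2 * (x \<bullet> (C *v x)) - 2 * (c * (v \<bullet> (C *v x))) + v \<bullet> (C *v v)"
    using C_inner_commute[of x v]
    by (simp add: matrix_vector_mult_diff_distrib matrix_vector_mult_scaleR inner_diff_left
        inner_diff_right power2_eq_square algebra_simps)
  finally have expand: "0 \<le> c\<^sup>2 * (x \<bullet> (C *v x)) - 2 * (c * (v \<bullet> (C *v x))) + v \<bullet> (C *v v)" .
  have "c * (v \<bullet> (C *v x)) = v \<bullet> (L *v v)"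
    using inner_L_mult_G[of v x] unfolding v_def by simp
  moreover have "c\<^sup>2 * (x \<bullet> (C *v x)) \<le> c\<^sup>2 * (x \<bullet> (L *v x))"
    by (intro mult_left_mono C_le_L) simp
  ultimately have "v \<bullet> (L *v v) \<le> c\<^sup>2 * (x \<bullet> (L *v x))"
    using expand C_le_L[of v] by linarith
  then show ?thesis
    by (simp add: v_def)
qed

lemma iteration_tendsto:
  assumes "c < 1" and step: "\<And>k. w (Suc k) - x = G *v (w k - x)"
  shows "w \<longlonglongrightarrow> x"
proof -
  define e where "e k = w k - x" for k
  define E where "E y = y \<bullet> (L *v y)" for y
  have energy: "E (e k) \<le> (c\<^sup>2) ^ k * E (e 0)" for k
  proof (induction k)
    case (Suc k)
    have "E (e (Suc k)) \<le> c\<^sup>2 * E (e k)"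
      using energy_contraction unfolding E_def e_def step .
    also have "\<dots> \<le> c\<^sup>2 * ((c\<^sup>2) ^ k * E (e 0))"
      using Suc by (simp add: mult_left_mono)
    finally show ?case
      by (simp add: mult.assoc)
  qed simp
  obtain m where "0 < m" and coercive: "\<And>y. m * (norm y)\<^sup>2 \<le> E y"
    using spd_coercive[OF L_spd] unfolding E_def by blast
  have "0 \<le> E (e 0) / m"
    using \<open>0 < m\<close> spd_quadratic_nonneg[OF L_spd] unfolding E_def by simp
  have "norm (e k) \<le> c ^ k * sqrt (E (e 0) / m)" for k
  proof (rule power2_le_imp_le)
    have "(norm (e k))\<^sup>2 \<le> (c\<^sup>2) ^ k * (E (e 0) / m)"
      using coercive[of "e k"] energy[of k] \<open>0 < m\<close> by (simp add: field_simps)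
    also have "\<dots> = (c ^ k * sqrt (E (e 0) / m))\<^sup>2"
      using \<open>0 \<le> E (e 0) / m\<close> by (simp add: power_mult_distrib flip: power_mult)
        (simp add: mult.commute power_mult)
    finally show "(norm (e k))\<^sup>2 \<le> (c ^ k * sqrt (E (e 0) / m))\<^sup>2" .
    show "0 \<le> c ^ k * sqrt (E (e 0) / m)"
      using c_nonneg \<open>0 \<le> E (e 0) / m\<close> by simp
  qed
  moreover have "(\<lambda>k. c ^ k * sqrt (E (e 0) / m)) \<longlonglongrightarrow> 0"
    using c_nonneg \<open>c < 1\<close> by (intro tendsto_mult_left_zero LIMSEQ_power_zero) simp
  ultimately have "e \<longlonglongrightarrow> 0"
    by (intro Lim_null_comparison[of e]) auto
  then have "(\<lambda>k. e k + x) \<longlonglongrightarrow> 0 + x"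
    by (intro tendsto_add) auto
  then show ?thesis
    by (simp add: e_def)
qed

end

lemma spd_pencil_scaled_inverse:
  fixes C L :: "real^'n^'n"
  assumes "spd C" and "spd L" and "\<And>x. x \<bullet> (C *v x) \<le> x \<bullet> (L *v x)" and "0 \<le> c"
  shows "spd_pencil C L (c *\<^sub>R (matrix_inv L ** C)) c"
proof
  show "L ** (c *\<^sub>R (matrix_inv L ** C)) = c *\<^sub>R C"
    using invertible_matrix_inv(1)[OF spd_invertible[OF assms(2)]]
    by (simp add: matrix_mul_assoc matrix_scalar_ac flip: scalar_matrix_assoc)
qed (use assms in auto)

lemma preconditioned_iteration_matrix:
  fixes C K :: "real^'n^'n"
  assumes "invertible (C + \<beta>l *\<^sub>R K)" and "\<beta> \<noteq> 0"
  shows "mat 1 - (\<beta>l / \<beta>) *\<^sub>R (matrix_inv (C + \<beta>l *\<^sub>R K) ** (C + \<beta> *\<^sub>R K))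
    = (1 - \<beta>l / \<beta>) *\<^sub>R (matrix_inv (C + \<beta>l *\<^sub>R K) ** C)"
proof -
  define M where "M = matrix_inv (C + \<beta>l *\<^sub>R K)"
  have "mat 1 = M ** C + \<beta>l *\<^sub>R (M ** K)"
    using invertible_matrix_inv(2)[OF assms(1)]
    by (simp add: M_def matrix_add_ldistrib matrix_scalar_ac flip: scalar_matrix_assoc)
  then show ?thesis
    using assms(2) unfolding M_def[symmetric]
    by (simp add: matrix_add_ldistrib matrix_scalar_ac algebra_simps flip: scalar_matrix_assoc)
qed

lemma stationary_iteration_error:
  fixes M H :: "real^'n^'n"
  assumes "H *v x = b" and "w' = w + a *s (M *v (b - H *v w))"
  shows "w' - x = (mat 1 - a *\<^sub>R (M ** H)) *v (w - x)"
  using assms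
  by (simp add: scalar_mult_eq_scaleR matrix_vector_mult_diff_distrib matrix_vector_mult_diff_rdistrib
      algebra_simps flip: matrix_vector_mul_assoc scaleR_matrix_vector_assoc)

theorem lemma3p2:
  fixes C :: "real^'n^'n" and F :: "real^'p^'n"
    and \<beta> \<beta>l :: real and b :: "real^'n" and w :: "nat \<Rightarrow> real^'n"
  assumes C_spd: "spd C"
    and np_lt_n: "CARD('p) < CARD('n)"
    and F_rank: "rank F = CARD('p)"
    and \<beta>l_pos: "0 < \<beta>l" and \<beta>_gt: "\<beta>l < \<beta>"
    and iter: "\<And>k. w (Suc k) = w k + (\<beta>l / \<beta>) *s
        (matrix_inv (C + \<beta>l *\<^sub>R (F ** transpose F))
           *v (b - (C + \<beta> *\<^sub>R (F ** transpose F)) *v w k))"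
  shows "mat 1 - (\<beta>l / \<beta>) *\<^sub>R (matrix_inv (C + \<beta>l *\<^sub>R (F ** transpose F))
             ** (C + \<beta> *\<^sub>R (F ** transpose F)))
         = (1 - \<beta>l / \<beta>) *\<^sub>R (matrix_inv (C + \<beta>l *\<^sub>R (F ** transpose F)) ** C)
     \<and> spectral_radius (mat 1 - (\<beta>l / \<beta>) *\<^sub>R (matrix_inv (C + \<beta>l *\<^sub>R (F ** transpose F))
             ** (C + \<beta> *\<^sub>R (F ** transpose F)))) = 1 - \<beta>l / \<beta>
     \<and> 1 - \<beta>l / \<beta> < 1
     \<and> (\<exists>!x. (C + \<beta> *\<^sub>R (F ** transpose F)) *v x = b)
     \<and> w \<longlonglongrightarrow> (THE x. (C + \<beta> *\<^sub>R (F ** transpose F)) *v x = b)"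
proof -
  let ?K = "F ** transpose F"
  let ?L = "C + \<beta>l *\<^sub>R ?K" and ?H = "C + \<beta> *\<^sub>R ?K" and ?c = "1 - \<beta>l / \<beta>"
  let ?G = "?c *\<^sub>R (matrix_inv ?L ** C)"
  have "0 < \<beta>"
    using \<beta>l_pos \<beta>_gt by linarith
  have L_spd: "spd ?L" and H_spd: "spd ?H"
    using C_spd \<beta>l_pos \<open>0 < \<beta>\<close> by (simp_all add: spd_add_mult_transpose)
  have G_eq: "mat 1 - (\<beta>l / \<beta>) *\<^sub>R (matrix_inv ?L ** ?H) = ?G"
    using spd_invertible[OF L_spd] \<open>0 < \<beta>\<close> by (simp add: preconditioned_iteration_matrix)
  interpret spd_pencil C ?L ?G ?c
    using C_spd L_spd \<beta>l_pos \<beta>_gt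
    by (intro spd_pencil_scaled_inverse quadratic_form_le_add_mult_transpose) simp_all
  obtain u where "u \<noteq> 0" and "transpose F *v u = 0"
    using matrix_nonfull_linear_equations_eq rank_bound[of "transpose F"] np_lt_n by fastforce
  then have "C *v u = ?L *v u"
    by (simp add: matrix_vector_mult_add_rdistrib del: transpose_matrix_vector
        flip: scaleR_matrix_vector_assoc matrix_vector_mul_assoc)
  then have "spectral_radius ?G = ?c"
    by (rule spectral_radius_eq[OF \<open>u \<noteq> 0\<close> G_mult_eq_if_C_eq_L])
  have "\<exists>!x. ?H *v x = b"
    using invertible_ex1_solution[OF spd_invertible[OF H_spd]] .
  then obtain x where x: "?H *v x = b"
    by blast
  have "w \<longlonglongrightarrow> x"
    using \<beta>l_pos \<open>0 < \<beta>\<close> stationary_iteration_error[OF x iter]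
    by (intro iteration_tendsto) (simp_all add: G_eq)
  moreover have "(THE x. ?H *v x = b) = x"
    using \<open>\<exists>!x. ?H *v x = b\<close> x by (rule the1_equality)
  ultimately show ?thesis
    using G_eq \<open>spectral_radius ?G = ?c\<close> \<open>\<exists>!x. ?H *v x = b\<close> \<open>0 < \<beta>\<close> \<beta>l_pos by simp
qed

end
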